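(* For every integer $n\ge0$, $B_{3,1}(n)=T(n)$. Here $B_{3,1}(n)$ is the number of partitions $\pi=(\pi_1\ge\pi_2\ge\dots\ge\pi_\ell)$ of $n$ such that $m_1(\pi)=0$, $m_j(\pi)+m_{j+1}(\pi)\le 2$ for all $j\ge1$, and for every $1\le j<\ell$, if $\pi_j-\pi_{j+1}\le1$ then $\pi_j+\pi_{j+1}\equiv 0\pmod 2$. And $T(n)$ is the number of partitions $\lambda$ of $n$ such that: $m_j(\lambda)\le 1$ for odd $j$; $m_j(\lambda)=0$ for odd $j<R_1(\lambda)+2$; $m_j(\lambda)\ge2$ for even $j$ with $0<j<R_1(\lambda)$; and no two consecutive integers both appear as parts of $\lambda$.
   Context: $m_j(\pi)$ is the multiplicity of $j$ as a part of $\pi$. $R_1(\lambda)$ is the largest part of $\lambda$ with multiplicity at least $2$, or $0$ if there is none. *)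

theory Defs
  imports Main
begin

definition partitions :: "nat \<Rightarrow> nat list set" where
  "partitions n = {p. sorted_wrt (\<ge>) p \<and> 0 \<notin> set p \<and> sum_list p = n}"

abbreviation mult :: "nat \<Rightarrow> nat list \<Rightarrow> nat" where
  "mult j p \<equiv> count_list p j"

definition R1 :: "nat list \<Rightarrow> nat" where
  "R1 p = (if \<exists>j. mult j p \<ge> 2 then Max {j. mult j p \<ge> 2} else 0)"

definition B31_cond :: "nat list \<Rightarrow> bool" where
  "B31_cond p \<longleftrightarrow>
     mult 1 p = 0 \<and>
     (\<forall>j\<ge>1. mult j p + mult (j+1) p \<le> 2) \<and>
     (\<forall>i. i + 1 < length p \<longrightarrow> p!i - p!(i+1) \<le> 1 \<longrightarrow> even (p!i + p!(i+1)))"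

definition B31 :: "nat \<Rightarrow> nat" where
  "B31 n = card {p \<in> partitions n. B31_cond p}"

definition T_cond :: "nat list \<Rightarrow> bool" where
  "T_cond l \<longleftrightarrow>
     (\<forall>j. odd j \<longrightarrow> mult j l \<le> 1) \<and>
     (\<forall>j. odd j \<and> j < R1 l + 2 \<longrightarrow> mult j l = 0) \<and>
     (\<forall>j. even j \<and> 0 < j \<and> j < R1 l \<longrightarrow> mult j l \<ge> 2) \<and>
     (\<forall>j. \<not> (j \<in> set l \<and> j + 1 \<in> set l))"

definition T :: "nat \<Rightarrow> nat" where
  "T n = card {l \<in> partitions n. T_cond l}"

end

theory Submission
  imports Defs
begin

text \<open>
  Write partitions as increasing lists and refine both counts by the number \<open>k\<close> of distinct
  repeated parts and the number \<open>m\<close> of parts occurring exactly once. The partitions counted by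
  \<open>B31\<close> are those with parts \<open>\<ge> 2\<close>, multiplicities \<open>\<le> 2\<close> and no two consecutive integers
  as parts; those counted by \<open>T\<close> have parts \<open>\<ge> 2\<close>, no two consecutive integers as parts, and
  repeated parts exactly \<open>2, 4, \<dots>, 2k\<close>. For fixed \<open>k\<close> and \<open>m\<close> both counts, as functions of
  \<open>n\<close>, satisfy
    \<open>f k m n = f k m (n - (2k + m)) + f k (m - 1) (n - 2(2k + m)) + f (k - 1) m (n - 2(2k + m))\<close>
  with \<open>f 0 0 n = [n = 0]\<close>, and this recurrence determines them. On the first side it comes from
  removing the smallest part (once or twice) and lowering all other parts by one or two. On the
  second side the smallest part is peeled off together with all its copies, which expresses the
  count through sums over arithmetic progressions; the recurrence then follows by induction on
  \<open>k\<close>, by deciding whether the largest repeated part \<open>2k\<close> occurs more than twice and whether the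
  smallest single part is \<open>2k + 2\<close>.
\<close>

definition no_consecutive :: "nat list \<Rightarrow> bool" where
  "no_consecutive L \<longleftrightarrow> (\<forall>j. \<not> (j \<in> set L \<and> Suc j \<in> set L))"

definition num_repeated :: "nat list \<Rightarrow> nat" where
  "num_repeated L = card {j. 2 \<le> count_list L j}"

definition num_single :: "nat list \<Rightarrow> nat" where
  "num_single L = card {j. count_list L j = 1}"

lemma in_set_iff_count_list_pos: "x \<in> set L \<longleftrightarrow> 0 < count_list L x"
  by (metis count_list_0_iff gr0I less_numeral_extra(3))

lemma count_list_pred_subset_set: "\<not> P 0 \<Longrightarrow> {j. P (count_list L j)} \<subseteq> set L"
  by (auto simp: in_set_iff_count_list_pos) (metis gr0I)

lemma finite_count_list_pred: "\<not> P 0 \<Longrightarrow> finite {j. P (count_list L j)}"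
  by (rule finite_subset[OF count_list_pred_subset_set]) simp_all

lemma card_count_list_pred_insert:
  assumes "x \<notin> set L" and "P (count_list M x)" and "\<not> P 0"
    and "\<And>j. j \<noteq> x \<Longrightarrow> count_list M j = count_list L j"
  shows "card {j. P (count_list M j)} = Suc (card {j. P (count_list L j)})"
proof -
  have "{j. P (count_list M j)} = insert x {j. P (count_list L j)}"
    using assms by auto metis
  then show ?thesis
    using assms by (simp add: finite_count_list_pred count_list_0_iff)
qed

lemma num_parts_Nil: "num_repeated [] = 0" "num_single [] = 0"
  by (simp_all add: num_repeated_def num_single_def)

lemma num_parts_Cons_notin:
  assumes "x \<notin> set L"
  shows "num_repeated (x # L) = num_repeated L" "num_single (x # L) = Suc (num_single L)"
proof -
  show "num_repeated (x # L) = num_repeated L"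
    unfolding num_repeated_def by (rule arg_cong[where f = card]) (use assms in auto)
  show "num_single (x # L) = Suc (num_single L)"
    unfolding num_single_def by (rule card_count_list_pred_insert) (use assms in auto)
qed

lemma num_parts_Cons_Cons_notin:
  assumes "x \<notin> set L"
  shows "num_repeated (x # x # L) = Suc (num_repeated L)" "num_single (x # x # L) = num_single L"
proof -
  show "num_repeated (x # x # L) = Suc (num_repeated L)"
    unfolding num_repeated_def by (rule card_count_list_pred_insert) (use assms in auto)
  show "num_single (x # x # L) = num_single L"
    unfolding num_single_def by (rule arg_cong[where f = card]) (use assms in auto)
qed

lemma num_parts_Cons_repeated:
  assumes "2 \<le> count_list L x"
  shows "num_repeated (x # L) = num_repeated L" "num_single (x # L) = num_single L"
  unfolding num_repeated_def num_single_def
  by (rule arg_cong[where f = card], use assms in auto)+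

lemma num_parts_eq_0_imp_Nil:
  assumes "num_repeated L = 0" and "num_single L = 0"
  shows "L = []"
proof (rule ccontr)
  assume "L \<noteq> []"
  then obtain x where "count_list L x \<noteq> 0" by (metis count_list_0_iff last_in_set)
  then have "x \<in> {j. 2 \<le> count_list L j} \<or> x \<in> {j. count_list L j = 1}" by auto
  then show False
    using assms finite_count_list_pred[of "\<lambda>i. 2 \<le> i" L] finite_count_list_pred[of "\<lambda>i. i = 1" L]
    by (auto simp: num_repeated_def num_single_def)
qed

lemma num_repeated_eq_0_iff: "num_repeated L = 0 \<longleftrightarrow> (\<forall>j. count_list L j < 2)"
  using finite_count_list_pred[of "\<lambda>i. 2 \<le> i" L] by (auto simp: num_repeated_def not_le)

lemma length_eq_num_parts:
  assumes "\<forall>j. count_list L j \<le> 2"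
  shows "length L = 2 * num_repeated L + num_single L"
proof -
  let ?R = "{j. 2 \<le> count_list L j}" and ?S = "{j. count_list L j = 1}"
  have fin: "finite ?R" "finite ?S" by (rule finite_count_list_pred, simp)+
  have set_L: "set L = ?R \<union> ?S"
  proof (intro set_eqI iffI)
    fix j assume "j \<in> set L"
    then have "0 < count_list L j" by (simp only: in_set_iff_count_list_pos)
    then show "j \<in> ?R \<union> ?S" using assms[rule_format, of j] by auto
  qed (auto simp only: in_set_iff_count_list_pos mem_Collect_eq Un_iff)
  have "length L = sum (count_list L) (?R \<union> ?S)"
    using sum_count_set[of L "set L"] fin unfolding set_L by simp
  also have "\<dots> = sum (count_list L) ?R + sum (count_list L) ?S"
    by (rule sum.union_disjoint) (use fin in auto)
  also have "sum (count_list L) ?R = sum (\<lambda>_. 2) ?R"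
    using assms by (intro sum.cong) (auto intro: antisym)
  also have "sum (count_list L) ?S = sum (\<lambda>_. 1) ?S" by simp
  finally show ?thesis by (simp add: num_repeated_def num_single_def)
qed

lemma length_le_sum_list: "0 \<notin> set L \<Longrightarrow> length L \<le> sum_list L"
  by (induction L) (auto simp: Suc_le_eq)

lemma num_parts_le_sum_list:
  assumes "0 \<notin> set L"
  shows "num_repeated L \<le> sum_list L" and "num_single L \<le> sum_list L"
proof -
  have "card {j. P (count_list L j)} \<le> sum_list L" if "\<not> P 0" for P
  proof -
    have "card {j. P (count_list L j)} \<le> card (set L)"
      using that by (intro card_mono count_list_pred_subset_set) simp
    also have "\<dots> \<le> length L" by (rule card_length)
    also have "\<dots> \<le> sum_list L" using assms by (rule length_le_sum_list)
    finally show ?thesis .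
  qed
  from this[of "\<lambda>i. 2 \<le> i"] this[of "\<lambda>i. i = 1"]
  show "num_repeated L \<le> sum_list L" "num_single L \<le> sum_list L"
    unfolding num_repeated_def num_single_def by simp_all
qed

lemma finite_lists_sum_list: "finite {L :: nat list. 0 \<notin> set L \<and> sum_list L = n}"
proof (rule finite_subset)
  show "{L. 0 \<notin> set L \<and> sum_list L = n} \<subseteq> {L. set L \<subseteq> {..n} \<and> length L \<le> n}"
    using length_le_sum_list member_le_sum_list by fastforce
qed (rule finite_lists_length_le, simp)

lemma count_list_map_Suc: "count_list (map Suc L) j = (if j = 0 then 0 else count_list L (j - 1))"
  by (induction L) auto

lemma Collect_count_list_map_Suc:
  assumes "\<not> P 0"
  shows "{j. P (count_list (map Suc L) j)} = Suc ` {j. P (count_list L j)}"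
proof (intro set_eqI iffI)
  fix j assume j: "j \<in> {j. P (count_list (map Suc L) j)}"
  with assms obtain i where "j = Suc i" by (cases j) (auto simp: count_list_map_Suc)
  with j show "j \<in> Suc ` {j. P (count_list L j)}" by (simp add: count_list_map_Suc)
qed (auto simp: count_list_map_Suc)

lemma num_parts_map_Suc:
  "num_repeated (map Suc L) = num_repeated L" "num_single (map Suc L) = num_single L"
  unfolding num_repeated_def num_single_def
  by (subst Collect_count_list_map_Suc, simp, rule card_image, simp)+

lemma sum_list_map_Suc: "sum_list (map Suc L) = sum_list L + length L"
  using sum_list_Suc[of "\<lambda>x. x" L] by simp

lemma sorted_Cons_min:
  assumes "sorted L" and "\<forall>x\<in>set L. c \<le> x" and "c \<in> set L"
  obtains L' where "L = c # L'"
proof (cases L)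
  case (Cons a L')
  with assms have "a = c" by (auto intro: antisym)
  with Cons that show thesis by blast
qed (use assms in simp)

lemma sorted_min_cases:
  assumes "sorted L" and "\<forall>x\<in>set L. c \<le> x"
  obtains "c \<notin> set L" | L' where "L = c # L'" "c \<notin> set L'" | L' where "L = c # c # L'"
proof (cases "c \<in> set L")
  case True
  with assms obtain L1 where L1: "L = c # L1" by (rule sorted_Cons_min)
  show thesis
  proof (cases "c \<in> set L1")
    case True
    with assms L1 obtain L2 where "L1 = c # L2" by (auto elim: sorted_Cons_min)
    with L1 that(3) show thesis by blast
  qed (use L1 that(2) in blast)
qed (use that(1) in blast)

lemma no_consecutive_Cons:
  assumes "no_consecutive L" and "\<forall>x\<in>set L. c + 2 \<le> x"
  shows "no_consecutive (c # L)"
  unfolding no_consecutive_def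
proof (intro allI notI)
  fix j assume j: "j \<in> set (c # L) \<and> Suc j \<in> set (c # L)"
  show False
  proof (cases "j = c")
    case True
    with j assms(2) show False by auto
  next
    case False
    with j have "j \<in> set L" by simp
    with j assms(2) have "Suc j \<in> set L" by auto
    with \<open>j \<in> set L\<close> assms(1) show False by (simp add: no_consecutive_def)
  qed
qed

lemma no_consecutive_Cons_Cons: "no_consecutive (c # c # L) \<longleftrightarrow> no_consecutive (c # L)"
  by (simp add: no_consecutive_def)

lemma no_consecutive_map_Suc: "no_consecutive (map Suc L) \<longleftrightarrow> no_consecutive L"
proof
  assume h: "no_consecutive (map Suc L)"
  show "no_consecutive L"
    unfolding no_consecutive_def
  proof (intro allI notI)
    fix j assume "j \<in> set L \<and> Suc j \<in> set L"
    then have "Suc j \<in> set (map Suc L) \<and> Suc (Suc j) \<in> set (map Suc L)" by simp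
    with h show False unfolding no_consecutive_def by blast
  qed
next
  assume h: "no_consecutive L"
  show "no_consecutive (map Suc L)"
    unfolding no_consecutive_def
  proof (intro allI notI)
    fix j assume j: "j \<in> set (map Suc L) \<and> Suc j \<in> set (map Suc L)"
    then obtain i where "j = Suc i" "i \<in> set L" by auto
    with j have "i \<in> set L \<and> Suc i \<in> set L" by auto
    with h show False unfolding no_consecutive_def by blast
  qed
qed

lemma no_consecutive_rev: "no_consecutive (rev L) \<longleftrightarrow> no_consecutive L"
  by (simp add: no_consecutive_def)

section \<open>A recurrence with a unique solution\<close>

locale partition_recurrence =
  fixes f :: "nat \<Rightarrow> nat \<Rightarrow> int \<Rightarrow> nat"
  assumes vanish_neg: "n < 0 \<Longrightarrow> f k m n = 0"
    and empty: "f 0 0 n = (if n = 0 then 1 else 0)"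
    and step: "0 < k + m \<Longrightarrow> f k m n = f k m (n - int (2*k + m))
          + (if 0 < m then f k (m - 1) (n - 2 * int (2*k + m)) else 0)
          + (if 0 < k then f (k - 1) m (n - 2 * int (2*k + m)) else 0)"

lemma partition_recurrence_unique:
  assumes f: "partition_recurrence f" and g: "partition_recurrence g"
  shows "f k m n = g k m n"
proof (induction "k + m" arbitrary: k m n rule: less_induct)
  case less
  note IH_parts = less.hyps
  show ?case
  proof (induction "nat (n + 1)" arbitrary: n rule: less_induct)
    case (less n)
    show ?case
    proof (cases "n < 0 \<or> k + m = 0")
      case True
      then consider "n < 0" | "k = 0" "m = 0" by auto
      then show ?thesis
        by cases (simp_all add: partition_recurrence.vanish_neg[OF f] partition_recurrence.vanish_neg[OF g]
            partition_recurrence.empty[OF f] partition_recurrence.empty[OF g])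
    next
      case False
      let ?d = "int (2*k + m)"
      have "f k m (n - ?d) = g k m (n - ?d)"
        using less.hyps[of "n - ?d"] False by auto
      moreover have "0 < m \<Longrightarrow> f k (m - 1) n' = g k (m - 1) n'" for n'
        using IH_parts[of k "m - 1"] by simp
      moreover have "0 < k \<Longrightarrow> f (k - 1) m n' = g (k - 1) m n'" for n'
        using IH_parts[of "k - 1" m] by simp
      ultimately show ?thesis
        using partition_recurrence.step[OF f, of k m n] partition_recurrence.step[OF g, of k m n] False
        by (cases "0 < m"; cases "0 < k") simp_all
    qed
  qed
qed

section \<open>Sums along arithmetic progressions\<close>

text \<open>\<open>progression_sum g c n = (\<Sum>i | 0 \<le> n - i * c. g (n - i * c))\<close> for \<open>c > 0\<close>.\<close>

function progression_sum :: "(int \<Rightarrow> nat) \<Rightarrow> nat \<Rightarrow> int \<Rightarrow> nat" where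
  "progression_sum g c n =
     (if n < 0 \<or> c = 0 then 0 else progression_sum g c (n - int c) + g n)"
  by pat_completeness auto
termination by (relation "measure (\<lambda>(g, c, n). nat (n + 1))") auto

declare progression_sum.simps [simp del]

lemma progression_sum_neg: "n < 0 \<Longrightarrow> progression_sum g c n = 0"
  by (simp add: progression_sum.simps)

lemma progression_sum_step:
  "0 < c \<Longrightarrow> 0 \<le> n \<Longrightarrow> progression_sum g c n = progression_sum g c (n - int c) + g n"
  by (subst progression_sum.simps) simp

lemma progression_sum_add:
  "progression_sum (\<lambda>x. g x + h x) c n = progression_sum g c n + progression_sum h c n"
proof (induction g c n rule: progression_sum.induct)
  case (1 g c n)
  then show ?case
    by (cases "n < 0 \<or> c = 0") (simp_all add: progression_sum.simps[of _ c n])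
qed

lemma progression_sum_shift:
  assumes "0 \<le> t" and "\<And>x. x < 0 \<Longrightarrow> g x = 0"
  shows "progression_sum (\<lambda>x. g (x - t)) c n = progression_sum g c (n - t)"
proof (induction "nat (n + 1)" arbitrary: n rule: less_induct)
  case (less n)
  show ?case
  proof (cases "n < 0 \<or> c = 0")
    case True
    then show ?thesis
      using assms(1) progression_sum.simps[of _ c n] progression_sum.simps[of _ c "n - t"] by auto
  next
    case False
    have "progression_sum (\<lambda>x. g (x - t)) c n = progression_sum g c (n - int c - t) + g (n - t)"
      using less[of "n - int c"] False progression_sum_step[of c n "\<lambda>x. g (x - t)"] by simp
    also have "\<dots> = progression_sum g c (n - t)"
    proof (cases "n - t < 0")
      case True
      then show ?thesis
        using assms(2) progression_sum_neg[of "n - int c - t"] progression_sum_neg[of "n - t"] by simp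
    next
      case False
      then show ?thesis
        using \<open>\<not> (n < 0 \<or> c = 0)\<close> progression_sum_step[of c "n - t" g] by (simp add: algebra_simps)
    qed
    finally show ?thesis .
  qed
qed

lemma progression_sum_split:
  assumes "0 \<le> s" and "0 \<le> t" and "\<And>x. x < 0 \<Longrightarrow> g x = 0" and "\<And>x. x < 0 \<Longrightarrow> h x = 0"
    and "\<And>x. g x = g (x - s) + h (x - t)"
  shows "progression_sum g c n = progression_sum g c (n - s) + progression_sum h c (n - t)"
proof -
  have "g = (\<lambda>x. g (x - s) + h (x - t))" by (intro ext) (rule assms(5))
  then have "progression_sum g c n = progression_sum (\<lambda>x. g (x - s) + h (x - t)) c n"
    by (rule arg_cong)
  also have "\<dots> = progression_sum g c (n - s) + progression_sum h c (n - t)"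
    by (simp only: progression_sum_add progression_sum_shift assms(1-4))
  finally show ?thesis .
qed

section \<open>Lists without consecutive parts and with multiplicities at most two\<close>

definition gap_list :: "nat \<Rightarrow> nat list \<Rightarrow> bool" where
  "gap_list c L \<longleftrightarrow> sorted L \<and> (\<forall>x\<in>set L. c \<le> x) \<and> no_consecutive L"

lemma gap_list_Suc_iff: "c \<notin> set L \<Longrightarrow> gap_list (Suc c) L \<longleftrightarrow> gap_list c L"
  unfolding gap_list_def by (metis Suc_leD Suc_leI le_neq_implies_less)

lemma gap_list_Cons_notin_iff:
  assumes "c \<notin> set L"
  shows "gap_list c (c # L) \<longleftrightarrow> gap_list (c + 2) L"
proof
  assume G: "gap_list c (c # L)"
  then have "Suc c \<notin> set L" by (auto simp: gap_list_def no_consecutive_def)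
  with G assms have "\<forall>x\<in>set L. c + 2 \<le> x"
    by (auto simp: gap_list_def) (metis Suc_leI le_eq_less_or_eq)
  with G show "gap_list (c + 2) L"
    by (auto simp: gap_list_def no_consecutive_def)
next
  assume "gap_list (c + 2) L"
  then show "gap_list c (c # L)"
    by (auto simp: gap_list_def intro: no_consecutive_Cons)
qed

lemma gap_list_Cons_Cons_iff: "gap_list c (c # c # L) \<longleftrightarrow> gap_list c (c # L)"
  by (simp add: gap_list_def no_consecutive_Cons_Cons)

lemma gap_list_map_Suc: "gap_list (Suc c) (map Suc L) \<longleftrightarrow> gap_list c L"
  by (simp add: gap_list_def sorted_map no_consecutive_map_Suc)

definition B_list :: "nat \<Rightarrow> nat list \<Rightarrow> bool" where
  "B_list c L \<longleftrightarrow> gap_list c L \<and> (\<forall>j. count_list L j \<le> 2)"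

lemma B_list_Cons_notin_iff:
  assumes "c \<notin> set L"
  shows "B_list c (c # L) \<longleftrightarrow> B_list (c + 2) L"
proof -
  have "count_list L j \<le> count_list (c # L) j" for j by simp
  then have "(\<forall>j. count_list (c # L) j \<le> 2) \<longleftrightarrow> (\<forall>j. count_list L j \<le> 2)"
    using assms by (auto intro: le_trans)
  then show ?thesis
    using gap_list_Cons_notin_iff[OF assms] by (simp add: B_list_def)
qed

lemma B_list_Cons_Cons_iff:
  "B_list c (c # c # L) \<longleftrightarrow> c \<notin> set L \<and> B_list c (c # L)"
proof
  assume B: "B_list c (c # c # L)"
  have "count_list L c + 2 = count_list (c # c # L) c" by simp
  also have "\<dots> \<le> 2" using B by (simp only: B_list_def)
  finally have "c \<notin> set L" by (simp add: count_list_0_iff[symmetric])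
  moreover have "count_list (c # L) j \<le> count_list (c # c # L) j" for j by simp
  then have "\<forall>j. count_list (c # L) j \<le> 2"
    using B unfolding B_list_def by (meson le_trans)
  ultimately show "c \<notin> set L \<and> B_list c (c # L)"
    using B by (simp add: B_list_def gap_list_Cons_Cons_iff)
next
  assume B: "c \<notin> set L \<and> B_list c (c # L)"
  have "count_list (c # c # L) j \<le> 2" for j
  proof -
    have "count_list (c # L) j \<le> 2" using B unfolding B_list_def by blast
    with B show ?thesis by (cases "j = c") simp_all
  qed
  with B show "B_list c (c # c # L)"
    by (simp add: B_list_def gap_list_Cons_Cons_iff)
qed

lemma B_list_map_Suc: "B_list (Suc c) (map Suc L) \<longleftrightarrow> B_list c L"
proof -
  have "(\<forall>j. count_list (map Suc L) j \<le> 2) \<longleftrightarrow> (\<forall>j. count_list L j \<le> 2)"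
  proof (intro iffI allI)
    fix j assume "\<forall>j. count_list (map Suc L) j \<le> 2"
    then have "count_list (map Suc L) (Suc j) \<le> 2" ..
    then show "count_list L j \<le> 2" by (simp add: count_list_map_Suc)
  qed (simp add: count_list_map_Suc)
  then show ?thesis by (simp add: B_list_def gap_list_map_Suc)
qed

text \<open>The weight \<open>n\<close> is an integer so that recurrences may subtract from it freely.\<close>

definition B_lists :: "nat \<Rightarrow> nat \<Rightarrow> nat \<Rightarrow> int \<Rightarrow> nat list set" where
  "B_lists c k m n =
     {L. B_list c L \<and> int (sum_list L) = n \<and> num_repeated L = k \<and> num_single L = m}"

lemma finite_B_lists: "0 < c \<Longrightarrow> finite (B_lists c k m n)"
  by (rule finite_subset[OF _ finite_lists_sum_list[of "nat n"]])
     (auto simp: B_lists_def B_list_def gap_list_def)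

lemma B_lists_neg: "n < 0 \<Longrightarrow> B_lists c k m n = {}"
  by (auto simp: B_lists_def)

lemma B_lists_empty: "B_lists c 0 0 n = (if n = 0 then {[]} else {})"
proof -
  have "L \<in> B_lists c 0 0 n \<longleftrightarrow> L = [] \<and> n = 0" for L
  proof
    assume "L \<in> B_lists c 0 0 n"
    then have "L = []" "int (sum_list L) = n" using num_parts_eq_0_imp_Nil by (auto simp: B_lists_def)
    then show "L = [] \<and> n = 0" by simp
  qed (simp add: B_lists_def B_list_def gap_list_def no_consecutive_def num_parts_Nil)
  then show ?thesis by auto
qed

lemma B_lists_min: "L \<in> B_lists c k m n \<Longrightarrow> x \<in> set L \<Longrightarrow> c \<le> x"
  by (simp add: B_lists_def B_list_def gap_list_def)

lemma B_lists_notin: "c \<notin> set L \<Longrightarrow> L \<in> B_lists (Suc c) k m n \<longleftrightarrow> L \<in> B_lists c k m n"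
  by (simp add: B_lists_def B_list_def gap_list_Suc_iff)

lemma Cons_notin_in_B_lists:
  "c \<notin> set L \<Longrightarrow> c # L \<in> B_lists c k m n \<longleftrightarrow> 0 < m \<and> L \<in> B_lists (c + 2) k (m - 1) (n - int c)"
  by (auto simp: B_lists_def B_list_Cons_notin_iff num_parts_Cons_notin)

lemma Cons_Cons_in_B_lists:
  "c # c # L \<in> B_lists c k m n \<longleftrightarrow> 0 < k \<and> L \<in> B_lists (c + 2) (k - 1) m (n - 2 * int c)"
proof (cases "c \<in> set L")
  case False
  then show ?thesis
    by (auto simp: B_lists_def B_list_Cons_Cons_iff B_list_Cons_notin_iff num_parts_Cons_Cons_notin)
next
  case True
  then have "c # c # L \<notin> B_lists c k m n" by (simp add: B_lists_def B_list_Cons_Cons_iff)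
  moreover from True have "L \<notin> B_lists (c + 2) (k - 1) m (n - 2 * int c)" by (auto dest: B_lists_min)
  ultimately show ?thesis by blast
qed

lemma B_lists_decompose:
  "B_lists c k m n = B_lists (Suc c) k m n
    \<union> (if 0 < m then Cons c ` B_lists (c + 2) k (m - 1) (n - int c) else {})
    \<union> (if 0 < k then (\<lambda>L. c # c # L) ` B_lists (c + 2) (k - 1) m (n - 2 * int c) else {})"
  (is "?L = ?R")
proof
  show "?L \<subseteq> ?R"
  proof
    fix L assume L: "L \<in> ?L"
    then have "sorted L" "\<forall>x\<in>set L. c \<le> x" by (simp_all add: B_lists_def B_list_def gap_list_def)
    then consider "c \<notin> set L" | L' where "L = c # L'" "c \<notin> set L'" | L' where "L = c # c # L'"
      by (rule sorted_min_cases)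
    then show "L \<in> ?R"
      by cases (use L in \<open>auto simp: B_lists_notin Cons_notin_in_B_lists Cons_Cons_in_B_lists\<close>)
  qed
next
  show "?R \<subseteq> ?L"
  proof
    fix L assume "L \<in> ?R"
    then consider "L \<in> B_lists (Suc c) k m n"
      | L' where "L = c # L'" "0 < m" "L' \<in> B_lists (c + 2) k (m - 1) (n - int c)"
      | L' where "L = c # c # L'" "0 < k" "L' \<in> B_lists (c + 2) (k - 1) m (n - 2 * int c)"
      by (auto split: if_splits)
    then show "L \<in> ?L"
    proof cases
      case 1
      then have "c \<notin> set L" by (auto dest: B_lists_min)
      with 1 show ?thesis by (simp add: B_lists_notin)
    next
      case 2
      then have "c \<notin> set L'" by (auto dest: B_lists_min)
      with 2 show ?thesis by (simp add: Cons_notin_in_B_lists)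
    qed (simp add: Cons_Cons_in_B_lists)
  qed
qed

lemma card_B_lists_step:
  assumes "0 < c"
  shows "card (B_lists c k m n) = card (B_lists (Suc c) k m n)
    + (if 0 < m then card (B_lists (c + 2) k (m - 1) (n - int c)) else 0)
    + (if 0 < k then card (B_lists (c + 2) (k - 1) m (n - 2 * int c)) else 0)"
proof -
  define A where "A = B_lists (Suc c) k m n"
  define S where "S = (if 0 < m then Cons c ` B_lists (c + 2) k (m - 1) (n - int c) else {})"
  define D where
    "D = (if 0 < k then (\<lambda>L. c # c # L) ` B_lists (c + 2) (k - 1) m (n - 2 * int c) else {})"
  have fin: "finite A" "finite S" "finite D"
    using assms by (simp_all add: A_def S_def D_def finite_B_lists)
  have A: "c \<notin> set L" if "L \<in> A" for L
    using that by (auto simp: A_def B_lists_def B_list_def gap_list_def)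
  have S: "c \<in> set L \<and> c \<notin> set (tl L)" if "L \<in> S" for L
    using that by (auto simp: S_def B_lists_def B_list_def gap_list_def split: if_splits)
      (metis Suc_n_not_le_n le_SucI)
  have D: "c \<in> set L \<and> c \<in> set (tl L)" if "L \<in> D" for L
    using that by (auto simp: D_def split: if_splits)
  have "A \<inter> S = {}" "A \<inter> D = {}" "S \<inter> D = {}"
    using A S D by blast+
  then have "card (B_lists c k m n) = card A + card S + card D"
    unfolding B_lists_decompose[of c k m n] A_def[symmetric] S_def[symmetric] D_def[symmetric]
    using fin by (simp add: card_Un_disjoint Int_Un_distrib2)
  moreover have "card S = (if 0 < m then card (B_lists (c + 2) k (m - 1) (n - int c)) else 0)"
    by (simp add: S_def card_image)
  moreover have "card D = (if 0 < k then card (B_lists (c + 2) (k - 1) m (n - 2 * int c)) else 0)"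
    by (simp add: D_def card_image inj_on_def)
  ultimately show ?thesis by (simp add: A_def)
qed

lemma B_lists_Suc_shift: "B_lists (Suc c) k m (n + int (2*k + m)) = map Suc ` B_lists c k m n"
proof -
  have "map Suc L \<in> B_lists (Suc c) k m (n + int (2*k + m)) \<longleftrightarrow> L \<in> B_lists c k m n" for L
  proof -
    have "length L = 2 * num_repeated L + num_single L" if "B_list c L"
      using that length_eq_num_parts by (simp add: B_list_def)
    then have "B_list c L \<Longrightarrow> int (sum_list (map Suc L)) = n + int (2*k + m) \<and> num_repeated L = k
        \<and> num_single L = m \<longleftrightarrow> int (sum_list L) = n \<and> num_repeated L = k \<and> num_single L = m"
      by (auto simp: sum_list_map_Suc)
    then show ?thesis
      unfolding B_lists_def mem_Collect_eq B_list_map_Suc num_parts_map_Suc by blast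
  qed
  moreover have "L \<in> range (map Suc)" if "L \<in> B_lists (Suc c) k m (n + int (2*k + m))" for L
  proof
    from that show "L = map Suc (map (\<lambda>x. x - 1) L)"
      by (auto simp: B_lists_def B_list_def gap_list_def intro!: map_idI[symmetric])
  qed simp
  ultimately show ?thesis by blast
qed

lemma card_B_lists_Suc:
  "card (B_lists (Suc c) k m n) = card (B_lists c k m (n - int (2*k + m)))"
  using B_lists_Suc_shift[of c k m "n - int (2*k + m)"] by (simp add: card_image inj_on_def)

lemma card_B_lists_Suc_Suc:
  "card (B_lists (Suc (Suc c)) k m n) = card (B_lists c k m (n - 2 * int (2*k + m)))"
  by (simp add: card_B_lists_Suc algebra_simps)

lemma partition_recurrence_B_lists: "partition_recurrence (\<lambda>k m n. card (B_lists 2 k m n))"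
proof
  fix k m :: nat and n :: int
  show "n < 0 \<Longrightarrow> card (B_lists 2 k m n) = 0" by (simp add: B_lists_neg)
  show "card (B_lists 2 0 0 n) = (if n = 0 then 1 else 0)" by (simp add: B_lists_empty)
  let ?d = "int (2*k + m)"
  have "card (B_lists 3 k m n) = card (B_lists 2 k m (n - ?d))"
    using card_B_lists_Suc[of 2 k m n] by (simp add: numeral_eq_Suc)
  moreover have "0 < m \<Longrightarrow>
      card (B_lists 4 k (m - 1) (n - 2)) = card (B_lists 2 k (m - 1) (n - 2 * ?d))"
    using card_B_lists_Suc_Suc[of 2 k "m - 1" "n - 2"]
    by (simp add: numeral_eq_Suc algebra_simps)
  moreover have "0 < k \<Longrightarrow>
      card (B_lists 4 (k - 1) m (n - 4)) = card (B_lists 2 (k - 1) m (n - 2 * ?d))"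
    using card_B_lists_Suc_Suc[of 2 "k - 1" m "n - 4"]
    by (simp add: numeral_eq_Suc algebra_simps)
  ultimately show "card (B_lists 2 k m n) = card (B_lists 2 k m (n - ?d))
      + (if 0 < m then card (B_lists 2 k (m - 1) (n - 2 * ?d)) else 0)
      + (if 0 < k then card (B_lists 2 (k - 1) m (n - 2 * ?d)) else 0)"
    using card_B_lists_step[of 2 k m n] by (cases "0 < m"; cases "0 < k") (simp_all add: numeral_eq_Suc)
qed

section \<open>Lists whose repeated parts form an initial segment of a progression\<close>

text \<open>\<open>repeats_from c L\<close>: the repeated parts of \<open>L\<close> are \<open>c, c + 2, \<dots>, c + 2 (k - 1)\<close> for some \<open>k\<close>.\<close>

definition repeats_from :: "nat \<Rightarrow> nat list \<Rightarrow> bool" where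
  "repeats_from c L \<longleftrightarrow> (\<forall>j. 2 \<le> count_list L j \<longrightarrow>
     even (j + c) \<and> (\<forall>i. c \<le> i \<and> i \<le> j \<and> even (i + j) \<longrightarrow> 2 \<le> count_list L i))"

lemma repeats_fromD:
  assumes "repeats_from c L" and "2 \<le> count_list L j"
  shows "even (j + c)" and "c \<le> i \<Longrightarrow> i \<le> j \<Longrightarrow> even (i + j) \<Longrightarrow> 2 \<le> count_list L i"
  using assms unfolding repeats_from_def by blast+

lemma repeats_from_Cons_repeated:
  "2 \<le> count_list L c \<Longrightarrow> repeats_from c (c # L) \<longleftrightarrow> repeats_from c L"
  unfolding repeats_from_def by (intro iff_allI) (auto simp: le_Suc_eq)

lemma repeats_from_rev: "repeats_from c (rev L) \<longleftrightarrow> repeats_from c L"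
  by (simp add: repeats_from_def)

lemma repeats_from_Cons_Cons_notin:
  assumes "c \<notin> set L" and "\<forall>x\<in>set L. c + 2 \<le> x"
  shows "repeats_from c (c # c # L) \<longleftrightarrow> repeats_from (c + 2) L"
proof
  assume R: "repeats_from c (c # c # L)"
  show "repeats_from (c + 2) L"
    unfolding repeats_from_def
  proof (intro allI impI conjI)
    fix j assume j: "2 \<le> count_list L j"
    then have "j \<noteq> c" using assms(1) by auto
    with j have cc: "2 \<le> count_list (c # c # L) j" by simp
    from repeats_fromD(1)[OF R cc] show "even (j + (c + 2))" by simp
    fix i assume i: "c + 2 \<le> i \<and> i \<le> j \<and> even (i + j)"
    then have "2 \<le> count_list (c # c # L) i" by (intro repeats_fromD(2)[OF R cc]) auto
    with i show "2 \<le> count_list L i" by (simp split: if_splits)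
  qed
next
  assume R: "repeats_from (c + 2) L"
  show "repeats_from c (c # c # L)"
    unfolding repeats_from_def
  proof (intro allI impI)
    fix j assume j: "2 \<le> count_list (c # c # L) j"
    show "even (j + c) \<and> (\<forall>i. c \<le> i \<and> i \<le> j \<and> even (i + j) \<longrightarrow> 2 \<le> count_list (c # c # L) i)"
    proof (cases "j = c")
      case False
      with j have jL: "2 \<le> count_list L j" by simp
      have ev: "even (j + c)" using repeats_fromD(1)[OF R jL] by simp
      have "2 \<le> count_list (c # c # L) i" if i: "c \<le> i" "i \<le> j" "even (i + j)" for i
      proof (cases "i = c")
        case False
        have "i \<noteq> Suc c" using i(3) ev by auto
        with i False have "c + 2 \<le> i" by linarith
        with i have "2 \<le> count_list L i" by (intro repeats_fromD(2)[OF R jL]) auto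
        then show ?thesis by simp
      qed simp
      with ev show ?thesis by blast
    qed simp
  qed
qed

definition T_list :: "nat \<Rightarrow> nat list \<Rightarrow> bool" where
  "T_list c L \<longleftrightarrow> gap_list c L \<and> repeats_from c L"

lemma T_list_Cons_Cons_notin_iff:
  assumes "c \<notin> set L"
  shows "T_list c (c # c # L) \<longleftrightarrow> T_list (c + 2) L"
proof -
  have "gap_list c (c # c # L) \<longleftrightarrow> gap_list (c + 2) L"
    by (simp add: gap_list_Cons_Cons_iff gap_list_Cons_notin_iff[OF assms])
  moreover have "gap_list (c + 2) L \<Longrightarrow> \<forall>x\<in>set L. c + 2 \<le> x" by (simp add: gap_list_def)
  ultimately show ?thesis
    using repeats_from_Cons_Cons_notin[OF assms] unfolding T_list_def by blast
qed

lemma T_list_Cons_repeated: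
  assumes "2 \<le> count_list L c"
  shows "T_list c (c # L) \<longleftrightarrow> T_list c L"
proof -
  have "c \<in> set L" using assms by (simp add: in_set_iff_count_list_pos)
  then have "gap_list c (c # L) \<longleftrightarrow> gap_list c L"
    by (auto simp: gap_list_def no_consecutive_def)
  then show ?thesis
    by (simp add: T_list_def repeats_from_Cons_repeated[OF assms])
qed

lemma T_list_no_repeats:
  assumes "num_repeated L = 0"
  shows "T_list c L \<longleftrightarrow> B_list c L"
proof -
  have no_rep: "\<not> 2 \<le> count_list L j" for j
    using assms by (simp add: num_repeated_eq_0_iff not_le)
  then have "repeats_from c L" by (simp add: repeats_from_def)
  moreover have "\<forall>j. count_list L j \<le> 2" using no_rep by (simp add: not_le less_imp_le)
  ultimately show ?thesis by (simp add: T_list_def B_list_def)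
qed

lemma T_list_repeated_min:
  assumes "T_list c L" and "2 \<le> count_list L j"
  shows "2 \<le> count_list L c"
proof -
  have R: "repeats_from c L" using assms(1) by (simp add: T_list_def)
  have "j \<in> set L" using assms(2) by (simp add: in_set_iff_count_list_pos)
  then have "c \<le> j" using assms(1) by (simp add: T_list_def gap_list_def)
  moreover have "even (c + j)" using repeats_fromD(1)[OF R assms(2)] by (simp add: add.commute)
  ultimately show ?thesis using repeats_fromD(2)[OF R assms(2)] by simp
qed

definition T_lists :: "nat \<Rightarrow> nat \<Rightarrow> nat \<Rightarrow> int \<Rightarrow> nat list set" where
  "T_lists c k m n =
     {L. T_list c L \<and> int (sum_list L) = n \<and> num_repeated L = k \<and> num_single L = m}"

definition T_tails :: "nat \<Rightarrow> nat \<Rightarrow> nat \<Rightarrow> int \<Rightarrow> nat list set" where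
  "T_tails c k m n = {L. c # c # L \<in> T_lists c (Suc k) m (n + 2 * int c)}"

lemma finite_T_lists: "0 < c \<Longrightarrow> finite (T_lists c k m n)"
  by (rule finite_subset[OF _ finite_lists_sum_list[of "nat n"]])
     (auto simp: T_lists_def T_list_def gap_list_def)

lemma finite_T_tails: "0 < c \<Longrightarrow> finite (T_tails c k m n)"
  by (rule finite_subset[OF _ finite_lists_sum_list[of "nat n"]])
     (fastforce simp: T_tails_def T_lists_def T_list_def gap_list_def)

lemma T_lists_neg: "n < 0 \<Longrightarrow> T_lists c k m n = {}"
  by (auto simp: T_lists_def)

lemma T_tails_neg: "n < 0 \<Longrightarrow> T_tails c k m n = {}"
  by (auto simp: T_tails_def T_lists_def)

lemma T_lists_no_repeats: "T_lists c 0 m n = B_lists c 0 m n"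
  by (auto simp: T_lists_def B_lists_def T_list_no_repeats)

lemma T_lists_Suc: "T_lists c (Suc k) m n = (\<lambda>L. c # c # L) ` T_tails c k m (n - 2 * int c)"
proof
  show "T_lists c (Suc k) m n \<subseteq> (\<lambda>L. c # c # L) ` T_tails c k m (n - 2 * int c)"
  proof
    fix L assume L: "L \<in> T_lists c (Suc k) m n"
    then have T: "T_list c L" and "num_repeated L \<noteq> 0" by (simp_all add: T_lists_def)
    then obtain j where "2 \<le> count_list L j" by (auto simp: num_repeated_eq_0_iff not_less)
    with T have "2 \<le> count_list L c" by (rule T_list_repeated_min)
    moreover have "sorted L" and "\<forall>x\<in>set L. c \<le> x" using T by (simp_all add: T_list_def gap_list_def)
    ultimately obtain L' where "L = c # c # L'"
      by (elim sorted_min_cases) (auto simp: in_set_iff_count_list_pos)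
    with L show "L \<in> (\<lambda>L. c # c # L) ` T_tails c k m (n - 2 * int c)"
      by (auto simp: T_tails_def)
  qed
qed (auto simp: T_tails_def)

lemma T_tails_notin:
  "c \<notin> set L \<Longrightarrow> L \<in> T_tails c k m n \<longleftrightarrow> L \<in> T_lists (c + 2) k m n"
  by (auto simp: T_tails_def T_lists_def T_list_Cons_Cons_notin_iff num_parts_Cons_Cons_notin)

lemma Cons_in_T_tails: "c # L \<in> T_tails c k m n \<longleftrightarrow> L \<in> T_tails c k m (n - int c)"
proof -
  have "2 \<le> count_list (c # c # L) c" by simp
  then show ?thesis
    by (auto simp: T_tails_def T_lists_def T_list_Cons_repeated num_parts_Cons_repeated algebra_simps)
qed

lemma T_tails_decompose:
  "T_tails c k m n = Cons c ` T_tails c k m (n - int c) \<union> T_lists (c + 2) k m n"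
proof (intro set_eqI iffI)
  fix L assume L: "L \<in> T_tails c k m n"
  show "L \<in> Cons c ` T_tails c k m (n - int c) \<union> T_lists (c + 2) k m n"
  proof (cases "c \<in> set L")
    case True
    from L have "sorted L" "\<forall>x\<in>set L. c \<le> x"
      by (auto simp: T_tails_def T_lists_def T_list_def gap_list_def)
    with True obtain L' where "L = c # L'" using sorted_Cons_min by blast
    with L show ?thesis by (auto simp: Cons_in_T_tails)
  qed (use L in \<open>simp add: T_tails_notin\<close>)
next
  fix L assume "L \<in> Cons c ` T_tails c k m (n - int c) \<union> T_lists (c + 2) k m n"
  moreover have "c \<notin> set L" if "L \<in> T_lists (c + 2) k m n"
    using that by (auto simp: T_lists_def T_list_def gap_list_def)
  ultimately show "L \<in> T_tails c k m n" by (auto simp: Cons_in_T_tails T_tails_notin)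
qed

lemma card_T_tails:
  assumes "0 < c"
  shows "card (T_tails c k m n) = progression_sum (\<lambda>x. card (T_lists (c + 2) k m x)) c n"
proof (induction "nat (n + 1)" arbitrary: n rule: less_induct)
  case (less n)
  show ?case
  proof (cases "n < 0")
    case True
    then show ?thesis by (simp add: T_tails_neg progression_sum_neg)
  next
    case False
    have "Cons c ` T_tails c k m (n - int c) \<inter> T_lists (c + 2) k m n = {}"
      by (auto simp: T_lists_def T_list_def gap_list_def)
    then have "card (T_tails c k m n) = card (T_tails c k m (n - int c)) + card (T_lists (c + 2) k m n)"
      unfolding T_tails_decompose[of c k m n] using assms
      by (simp add: card_Un_disjoint finite_T_tails finite_T_lists card_image)
    also have "card (T_tails c k m (n - int c))
        = progression_sum (\<lambda>x. card (T_lists (c + 2) k m x)) c (n - int c)"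
      using less[of "n - int c"] False assms by simp
    finally show ?thesis using False assms by (simp add: progression_sum_step)
  qed
qed

lemma card_T_lists_Suc:
  assumes "0 < c"
  shows "card (T_lists c (Suc k) m n)
    = progression_sum (\<lambda>x. card (T_lists (c + 2) k m x)) c (n - 2 * int c)"
  unfolding T_lists_Suc by (simp add: card_image inj_on_def card_T_tails assms)

lemma card_T_lists_one_repeated:
  assumes "0 < c"
  shows "card (T_lists c 1 m n)
    = card (T_lists c 1 m (n - int c)) + card (T_lists c 0 m (n - 2 * int c - 2 * int m))"
proof (cases "n - 2 * int c < 0")
  case True
  with assms show ?thesis by (simp add: card_T_lists_Suc progression_sum_neg T_lists_neg)
next
  case False
  let ?g = "\<lambda>x. card (T_lists (c + 2) 0 m x)"
  have "card (T_lists c 1 m n) = progression_sum ?g c (n - 2 * int c - int c) + ?g (n - 2 * int c)"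
    using assms False progression_sum_step[of c "n - 2 * int c" ?g] by (simp add: card_T_lists_Suc)
  moreover have "?g (n - 2 * int c) = card (T_lists c 0 m (n - 2 * int c - 2 * int m))"
    using card_B_lists_Suc_Suc[of c 0 m "n - 2 * int c"] by (simp add: T_lists_no_repeats)
  ultimately show ?thesis using assms by (simp add: card_T_lists_Suc algebra_simps)
qed

text \<open>
  Combinatorially: either the largest repeated part \<open>c + 2k\<close> occurs more than twice, and one copy
  is removed, or it occurs exactly twice, and both copies are removed while every single part is
  lowered by \<open>2\<close>.
\<close>

lemma card_T_lists_largest_repeated:
  assumes "0 < c"
  shows "card (T_lists c (Suc k) m n) = card (T_lists c (Suc k) m (n - int (c + 2*k)))
    + card (T_lists c k m (n - 2 * int (c + 2*k) - 2 * int m))"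
  using assms
proof (induction k arbitrary: n c)
  case 0
  then show ?case using card_T_lists_one_repeated[of c m n] by simp
next
  case (Suc k)
  let ?g = "\<lambda>x. card (T_lists (c + 2) (Suc k) m x)"
  let ?f = "\<lambda>x. card (T_lists (c + 2) k m x)"
  define s where "s = int (c + 2 + 2*k)"
  define t where "t = 2 * s + 2 * int m"
  have g_step: "?g x = ?g (x - s) + ?f (x - t)" for x
    using Suc.IH[of "c + 2" x] by (simp add: s_def t_def algebra_simps)
  have split: "progression_sum ?g c y = progression_sum ?g c (y - s) + progression_sum ?f c (y - t)"
    for y by (rule progression_sum_split[where g = ?g and h = ?f, OF _ _ _ _ g_step])
      (simp_all add: s_def t_def T_lists_neg)
  have "card (T_lists c (Suc (Suc k)) m (n - int (c + 2 * Suc k)))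
      = progression_sum ?g c (n - 2 * int c - s)"
    using card_T_lists_Suc[OF Suc.prems, of "Suc k" m "n - int (c + 2 * Suc k)"]
    by (simp add: s_def algebra_simps)
  moreover have "card (T_lists c (Suc k) m (n - 2 * int (c + 2 * Suc k) - 2 * int m))
      = progression_sum ?f c (n - 2 * int c - t)"
    using card_T_lists_Suc[OF Suc.prems, of k m "n - 2 * int (c + 2 * Suc k) - 2 * int m"]
    by (simp add: s_def t_def algebra_simps)
  ultimately show ?case
    using split[of "n - 2 * int c"] card_T_lists_Suc[OF Suc.prems, of "Suc k" m n] by simp
qed

text \<open>
  Combinatorially: either the smallest single part exceeds \<open>c + 2k\<close>, and every single part is
  lowered by \<open>1\<close>, or it equals \<open>c + 2k\<close>, and it is removed while the other single parts are
  lowered by \<open>2\<close>.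
\<close>

lemma card_T_lists_smallest_single:
  assumes "0 < c" and "0 < m"
  shows "card (T_lists c k m n) = card (T_lists c k m (n - int m))
    + card (T_lists c k (m - 1) (n - int (c + 2*k) - 2 * int (m - 1)))"
  using assms(1)
proof (induction k arbitrary: n c)
  case 0
  have "card (B_lists c 0 m n)
      = card (B_lists (Suc c) 0 m n) + card (B_lists (c + 2) 0 (m - 1) (n - int c))"
    using card_B_lists_step[OF "0", of 0 m n] assms(2) by simp
  moreover have "card (B_lists (c + 2) 0 (m - 1) (n - int c))
      = card (B_lists c 0 (m - 1) (n - int c - 2 * int (m - 1)))"
    using card_B_lists_Suc_Suc[of c 0 "m - 1" "n - int c"] by simp
  ultimately show ?case by (simp add: T_lists_no_repeats card_B_lists_Suc)
next
  case (Suc k)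
  let ?g = "\<lambda>x. card (T_lists (c + 2) k m x)"
  let ?f = "\<lambda>x. card (T_lists (c + 2) k (m - 1) x)"
  define t where "t = int (c + 2 + 2*k) + 2 * int (m - 1)"
  have g_step: "?g x = ?g (x - int m) + ?f (x - t)" for x
    using Suc.IH[of "c + 2" x] by (simp add: t_def algebra_simps)
  have split:
    "progression_sum ?g c y = progression_sum ?g c (y - int m) + progression_sum ?f c (y - t)"
    for y by (rule progression_sum_split[where g = ?g and h = ?f, OF _ _ _ _ g_step])
      (simp_all add: t_def T_lists_neg)
  have "card (T_lists c (Suc k) m (n - int m)) = progression_sum ?g c (n - 2 * int c - int m)"
    using card_T_lists_Suc[OF Suc.prems, of k m "n - int m"] by (simp add: algebra_simps)
  moreover have "card (T_lists c (Suc k) (m - 1) (n - int (c + 2 * Suc k) - 2 * int (m - 1)))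
      = progression_sum ?f c (n - 2 * int c - t)"
    using card_T_lists_Suc[OF Suc.prems, of k "m - 1" "n - int (c + 2 * Suc k) - 2 * int (m - 1)"]
    by (simp add: t_def algebra_simps)
  ultimately show ?case
    using split[of "n - 2 * int c"] card_T_lists_Suc[OF Suc.prems, of k m n] by simp
qed

lemma partition_recurrence_T_lists: "partition_recurrence (\<lambda>k m n. card (T_lists 2 k m n))"
proof
  fix k m :: nat and n :: int
  show "n < 0 \<Longrightarrow> card (T_lists 2 k m n) = 0" by (simp add: T_lists_neg)
  show "card (T_lists 2 0 0 n) = (if n = 0 then 1 else 0)"
    by (simp add: T_lists_no_repeats B_lists_empty)
  assume km: "0 < k + m"
  let ?d = "int (2*k + m)"
  have single: "card (T_lists 2 k m x) = card (T_lists 2 k m (x - int m))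
      + card (T_lists 2 k (m - 1) (x - int (2*k) - 2 * int m))" if "0 < m" for x
    using card_T_lists_smallest_single[of 2 m k x] that by (simp add: algebra_simps)
  show "card (T_lists 2 k m n) = card (T_lists 2 k m (n - ?d))
      + (if 0 < m then card (T_lists 2 k (m - 1) (n - 2 * ?d)) else 0)
      + (if 0 < k then card (T_lists 2 (k - 1) m (n - 2 * ?d)) else 0)"
  proof (cases k)
    case 0
    with km single[of n] show ?thesis by (simp add: algebra_simps)
  next
    case (Suc k')
    have largest: "card (T_lists 2 k m n) = card (T_lists 2 k m (n - int (2*k)))
        + card (T_lists 2 k' m (n - 2 * ?d))"
      using card_T_lists_largest_repeated[of 2 k' m n] Suc by (simp add: algebra_simps)
    show ?thesis
    proof (cases "m = 0")
      case True
      with largest Suc show ?thesis by simp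
    next
      case False
      with largest Suc single[of "n - int (2*k)"] show ?thesis by (simp add: algebra_simps)
    qed
  qed
qed

section \<open>From partitions to lists\<close>

lemma no_consecutive_Cons_sorted_desc:
  assumes "sorted_wrt (\<ge>) (x # y # ys)" and "no_consecutive (y # ys)"
  shows "no_consecutive (x # y # ys) \<longleftrightarrow> x \<noteq> Suc y"
proof
  assume "no_consecutive (x # y # ys)"
  then show "x \<noteq> Suc y" by (auto simp: no_consecutive_def)
next
  assume xy: "x \<noteq> Suc y"
  show "no_consecutive (x # y # ys)"
    unfolding no_consecutive_def
  proof (intro allI notI)
    fix j assume j: "j \<in> set (x # y # ys) \<and> Suc j \<in> set (x # y # ys)"
    have le: "\<forall>z\<in>set (y # ys). z \<le> x" "\<forall>z\<in>set ys. z \<le> y" using assms(1) by auto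
    consider "j = x" | "Suc j = x" "j \<in> set (y # ys)" | "j \<in> set (y # ys)" "Suc j \<in> set (y # ys)"
      using j by auto
    then show False
    proof cases
      case 1
      with j le(1) show False by fastforce
    next
      case 2
      show False
      proof (cases "y = x")
        case True
        with 2 assms(2) show False by (auto simp: no_consecutive_def)
      next
        case False
        have "j \<le> y" using 2(2) le(2) by auto
        moreover have "y \<le> x" using le(1) by simp
        ultimately show False using 2(1) xy False by linarith
      qed
    next
      case 3
      with assms(2) show False unfolding no_consecutive_def by blast
    qed
  qed
qed

lemma no_consecutive_iff_adjacent:
  assumes "sorted_wrt (\<ge>) p"
  shows "no_consecutive p \<longleftrightarrow> (\<forall>i. Suc i < length p \<longrightarrow> p ! i \<noteq> Suc (p ! Suc i))"
  using assms
proof (induction p rule: induct_list012)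
  case (3 x y ys)
  have "(\<forall>i. Suc i < length (x # y # ys) \<longrightarrow> (x # y # ys) ! i \<noteq> Suc ((x # y # ys) ! Suc i))
      \<longleftrightarrow> x \<noteq> Suc y \<and> (\<forall>i. Suc i < length (y # ys) \<longrightarrow> (y # ys) ! i \<noteq> Suc ((y # ys) ! Suc i))"
    by (simp add: All_less_Suc2)
  moreover have "no_consecutive (x # y # ys) \<Longrightarrow> no_consecutive (y # ys)"
    unfolding no_consecutive_def by (meson list.set_intros(2))
  ultimately show ?case
    using 3 no_consecutive_Cons_sorted_desc by auto
qed (simp_all add: no_consecutive_def)

lemma adjacent_parity_iff_no_consecutive:
  assumes "sorted_wrt (\<ge>) p"
  shows "(\<forall>i. i + 1 < length p \<longrightarrow> p ! i - p ! (i + 1) \<le> 1 \<longrightarrow> even (p ! i + p ! (i + 1)))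
    \<longleftrightarrow> no_consecutive p"
proof -
  have "p ! i - p ! (i + 1) \<le> 1 \<longrightarrow> even (p ! i + p ! (i + 1)) \<longleftrightarrow> p ! i \<noteq> Suc (p ! Suc i)"
    if "i + 1 < length p" for i
  proof -
    have "p ! (i + 1) \<le> p ! i" using assms that by (simp add: sorted_wrt_iff_nth_less)
    then show ?thesis by (cases "p ! i = p ! (i + 1)") auto
  qed
  then show ?thesis using no_consecutive_iff_adjacent[OF assms] by auto
qed

lemma adjacent_mult_sum_le_2_iff:
  assumes "no_consecutive p" and "0 \<notin> set p"
  shows "(\<forall>j\<ge>1. mult j p + mult (j + 1) p \<le> 2) \<longleftrightarrow> (\<forall>j. mult j p \<le> 2)"
proof
  assume h: "\<forall>j\<ge>1. mult j p + mult (j + 1) p \<le> 2"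
  show "\<forall>j. mult j p \<le> 2"
  proof
    fix j show "mult j p \<le> 2"
      using h[rule_format, of j] assms(2) by (cases "j = 0") auto
  qed
next
  assume h: "\<forall>j. mult j p \<le> 2"
  show "\<forall>j\<ge>1. mult j p + mult (j + 1) p \<le> 2"
  proof (intro allI impI)
    fix j :: nat
    have "j \<notin> set p \<or> Suc j \<notin> set p" using assms(1) by (auto simp: no_consecutive_def)
    then show "mult j p + mult (j + 1) p \<le> 2" using h by auto
  qed
qed

lemma B31_cond_iff_B_list:
  assumes "p \<in> partitions n"
  shows "B31_cond p \<longleftrightarrow> B_list 2 (rev p)"
proof -
  have sorted: "sorted_wrt (\<ge>) p" and no0: "0 \<notin> set p" using assms by (simp_all add: partitions_def)
  have "mult 1 p = 0 \<longleftrightarrow> (\<forall>x\<in>set p. 2 \<le> x)"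
    using no0 by (auto simp: count_list_0_iff) (metis less_2_cases not_le)
  then show ?thesis
    using adjacent_parity_iff_no_consecutive[OF sorted] adjacent_mult_sum_le_2_iff[OF _ no0] sorted
    by (auto simp: B31_cond_def B_list_def gap_list_def no_consecutive_rev sorted_wrt_rev)
qed

lemma R1_greatest:
  assumes "2 \<le> mult j L"
  shows "2 \<le> mult (R1 L) L" and "j \<le> R1 L"
proof -
  have R: "R1 L = Max {j. 2 \<le> mult j L}" using assms by (auto simp: R1_def)
  have fin: "finite {j. 2 \<le> mult j L}" by (rule finite_count_list_pred) simp
  show "2 \<le> mult (R1 L) L" unfolding R using Max_in[OF fin] assms by auto
  show "j \<le> R1 L" unfolding R using Max_ge[OF fin] assms by simp
qed

lemma R1_pos_repeated: "0 < R1 L \<Longrightarrow> 2 \<le> mult (R1 L) L"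
  using R1_greatest(1) by (fastforce simp: R1_def)

lemma T_condD:
  assumes "T_cond L" and "0 \<notin> set L"
  shows "\<forall>x\<in>set L. 2 \<le> x" and "no_consecutive L" and "repeats_from 2 L"
proof -
  have odd_le: "odd j \<Longrightarrow> mult j L \<le> 1"
    and odd_small: "odd j \<Longrightarrow> j < R1 L + 2 \<Longrightarrow> mult j L = 0"
    and even_rep: "even j \<Longrightarrow> 0 < j \<Longrightarrow> j < R1 L \<Longrightarrow> 2 \<le> mult j L"
    and nc: "\<not> (j \<in> set L \<and> j + 1 \<in> set L)" for j
    using assms(1) by (simp_all add: T_cond_def)
  have "1 \<notin> set L" using odd_small[of 1] by (simp add: count_list_0_iff)
  with assms(2) show "\<forall>x\<in>set L. 2 \<le> x" by (metis One_nat_def less_2_cases not_le)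
  show "no_consecutive L" using nc by (simp add: no_consecutive_def)
  show "repeats_from 2 L"
    unfolding repeats_from_def
  proof (intro allI impI conjI)
    fix j assume j: "2 \<le> mult j L"
    show ev: "even (j + 2)" using odd_le[of j] j by auto
    fix i assume i: "2 \<le> i \<and> i \<le> j \<and> even (i + j)"
    show "2 \<le> mult i L"
    proof (cases "i < R1 L")
      case True
      with i ev show ?thesis by (intro even_rep) auto
    next
      case False
      with i R1_greatest[OF j] show ?thesis by (metis le_antisym le_trans not_le)
    qed
  qed
qed

lemma odd_part_gt_R1:
  assumes parts: "\<forall>x\<in>set L. 2 \<le> x" and nc: "no_consecutive L" and R: "repeats_from 2 L"
    and "odd j" and jL: "j \<in> set L"
  shows "R1 L + 2 \<le> j"
proof (rule ccontr)
  assume "\<not> R1 L + 2 \<le> j"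
  from jL parts have "2 \<le> j" by blast
  with \<open>odd j\<close> have "3 \<le> j" by presburger
  with \<open>\<not> R1 L + 2 \<le> j\<close> have RR: "2 \<le> mult (R1 L) L" by (intro R1_pos_repeated) simp
  then have "R1 L \<in> set L" by (simp add: in_set_iff_count_list_pos)
  with nc jL have "j \<noteq> Suc (R1 L)" unfolding no_consecutive_def by blast
  moreover have ev: "even (R1 L)" using repeats_fromD(1)[OF R RR] by simp
  ultimately have "j < R1 L" using \<open>odd j\<close> \<open>\<not> R1 L + 2 \<le> j\<close> by (cases "j = R1 L") auto
  with \<open>3 \<le> j\<close> \<open>odd j\<close> ev have "2 \<le> mult (j - 1) L"
    by (intro repeats_fromD(2)[OF R RR]) auto
  then have "j - 1 \<in> set L" by (simp add: in_set_iff_count_list_pos)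
  moreover have "Suc (j - 1) = j" using \<open>3 \<le> j\<close> by simp
  ultimately show False using jL nc unfolding no_consecutive_def by metis
qed

lemma T_condI:
  assumes parts: "\<forall>x\<in>set L. 2 \<le> x" and nc: "no_consecutive L" and R: "repeats_from 2 L"
  shows "T_cond L"
proof -
  have "mult j L \<le> 1" if "odd j" for j
  proof (rule ccontr)
    assume "\<not> mult j L \<le> 1"
    then have "2 \<le> mult j L" by simp
    from repeats_fromD(1)[OF R this] that show False by simp
  qed
  moreover have "2 \<le> mult j L" if "even j" "0 < j" "j < R1 L" for j
  proof -
    have RR: "2 \<le> mult (R1 L) L" using that by (intro R1_pos_repeated) simp
    then have "even (R1 L)" using repeats_fromD(1)[OF R] by simp
    moreover have "2 \<le> j" using that by presburger
    ultimately show ?thesis using that by (intro repeats_fromD(2)[OF R RR]) auto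
  qed
  moreover have "mult j L = 0" if "odd j" "j < R1 L + 2" for j
    using odd_part_gt_R1[OF assms \<open>odd j\<close>] that by (auto simp: count_list_0_iff)
  ultimately show ?thesis
    using nc by (simp add: T_cond_def no_consecutive_def)
qed

lemma T_cond_iff_T_list:
  assumes "p \<in> partitions n"
  shows "T_cond p \<longleftrightarrow> T_list 2 (rev p)"
proof -
  have "sorted (rev p)" and no0: "0 \<notin> set p"
    using assms by (simp_all add: partitions_def sorted_wrt_rev)
  then have "T_list 2 (rev p) \<longleftrightarrow> (\<forall>x\<in>set p. 2 \<le> x) \<and> no_consecutive p \<and> repeats_from 2 p"
    by (simp add: T_list_def gap_list_def no_consecutive_rev repeats_from_rev)
  then show ?thesis using T_condD[OF _ no0] T_condI by blast
qed

lemma card_partitions_as_lists: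
  assumes "\<And>p. p \<in> partitions n \<Longrightarrow> P p \<longleftrightarrow> Q (rev p)"
    and "\<And>L. Q L \<Longrightarrow> sorted L \<and> 0 \<notin> set L"
  shows "card {p \<in> partitions n. P p} = card {L. Q L \<and> sum_list L = n}"
proof -
  have "{p \<in> partitions n. P p} = rev ` {L. Q L \<and> sum_list L = n}"
  proof (intro set_eqI iffI)
    fix p assume "p \<in> {p \<in> partitions n. P p}"
    with assms(1) have "Q (rev p) \<and> sum_list (rev p) = n" by (auto simp: partitions_def)
    then show "p \<in> rev ` {L. Q L \<and> sum_list L = n}"
      by (metis (mono_tags) mem_Collect_eq rev_image_eqI rev_rev_ident)
  next
    fix p assume "p \<in> rev ` {L. Q L \<and> sum_list L = n}"
    then obtain L where L: "p = rev L" "Q L" "sum_list L = n" by blast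
    with assms(2) have "p \<in> partitions n" by (simp add: partitions_def sorted_wrt_rev)
    with assms(1) L show "p \<in> {p \<in> partitions n. P p}" by simp
  qed
  then show ?thesis by (simp add: card_image)
qed

lemma card_partitions_by_num_parts:
  assumes "\<And>p. p \<in> partitions n \<Longrightarrow> P p \<longleftrightarrow> Q (rev p)"
    and "\<And>L. Q L \<Longrightarrow> sorted L \<and> 0 \<notin> set L"
  shows "card {p \<in> partitions n. P p} = (\<Sum>k\<le>n. \<Sum>m\<le>n.
      card {L. Q L \<and> int (sum_list L) = int n \<and> num_repeated L = k \<and> num_single L = m})"
proof -
  define A where "A = {L. Q L \<and> sum_list L = n}"
  define part where "part km = {L \<in> A. (num_repeated L, num_single L) = km}" for km
  have fin: "finite A"
    unfolding A_def using assms(2) by (intro finite_subset[OF _ finite_lists_sum_list[of n]]) blast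
  have "A \<subseteq> (\<Union>km\<in>{..n} \<times> {..n}. part km)"
  proof
    fix L assume "L \<in> A"
    with assms(2) have "num_repeated L \<le> n" "num_single L \<le> n"
      using num_parts_le_sum_list[of L] by (simp_all add: A_def)
    with \<open>L \<in> A\<close> show "L \<in> (\<Union>km\<in>{..n} \<times> {..n}. part km)" by (auto simp: part_def)
  qed
  then have "A = (\<Union>km\<in>{..n} \<times> {..n}. part km)" by (auto simp: part_def)
  then have "card A = card (\<Union>km\<in>{..n} \<times> {..n}. part km)" by (rule arg_cong)
  also have "\<dots> = (\<Sum>km\<in>{..n} \<times> {..n}. card (part km))"
    by (rule card_UN_disjoint) (auto simp: part_def intro: finite_subset[OF _ fin])
  also have "\<dots> = (\<Sum>k\<le>n. \<Sum>m\<le>n. card (part (k, m)))"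
    by (simp add: sum.cartesian_product split_def)
  finally show ?thesis
    using card_partitions_as_lists[where Q = Q, OF assms] by (simp add: part_def A_def)
qed

theorem theorem8:
  fixes n :: nat
  shows "B31 n = T n"
proof -
  have "B31 n = (\<Sum>k\<le>n. \<Sum>m\<le>n. card (B_lists 2 k m (int n)))"
    unfolding B31_def B_lists_def
    by (rule card_partitions_by_num_parts[where Q = "B_list 2", OF B31_cond_iff_B_list])
       (auto simp: B_list_def gap_list_def)
  also have "\<dots> = (\<Sum>k\<le>n. \<Sum>m\<le>n. card (T_lists 2 k m (int n)))"
    by (simp add: partition_recurrence_unique[OF partition_recurrence_B_lists partition_recurrence_T_lists])
  also have "\<dots> = T n"
    unfolding T_def T_lists_def
    by (rule card_partitions_by_num_parts[where Q = "T_list 2", OF T_cond_iff_T_list, symmetric])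
       (auto simp: T_list_def gap_list_def)
  finally show ?thesis .
qed

end
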